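(* Let $\lambda>0$, let $\omega$ be a rooted tree (root $\varrho$) in which every vertex has finitely many and at least one child, and let $(X(u),u\in\mathbb{T})$ be the $\lambda$-biased branching random walk on $\omega$ with reproduction law $\mu$ ($\mu_0=0$, $\mu_1<1$, $m=\sum_k k\mu_k\in(1,\infty)$), started from one particle at $\varrho$. Assume that this branching random walk is strongly recurrent on $\omega$, i.e. for every vertex $x$, $\mathbf{P}_\omega(\forall n\ \exists u\in\mathbb{T}:|u|\ge n, X(u)=x\mid X(\varnothing)=x)=1$. Then for every $a>0$, $$\mathbf{P}_\omega\Big(\liminf_{n\to\infty}\max_{|u|=n}\frac{|X(u)|}{n}\ge a\Big)\in\{0,1\}.$$
   Context: $|x|$ is the distance of $x$ to $\varrho$, $x_-$ the parent and $\kappa_x$ the number of children of $x$. The $\lambda$-biased random walk on $\omega$ jumps from $\varrho$ to each child with probability $1/\kappa_\varrho$, and from $x\ne\varrho$ to $x_-$ with probability $\lambda/(\lambda+\kappa_x)$ and to each child with probability $1/(\lambda+\kappa_x)$. The branching random walk: genealogy $\mathbb{T}$ is a Bienaymé–Galton–Watson tree with offspring law $\mu$ (root $\varnothing$, $|u|$ = generation); each child of a particle at $x$ is placed independently by one step of the $\lambda$-biased walk from $x$; $\mathbf{P}_\omega$ denotes its law. *)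

theory Defs
  imports "HOL-Probability.Probability"
begin

text \<open>A rooted tree in which every vertex has finitely many and at least one child
is encoded (up to isomorphism) by its child-count function kappa on Ulam--Harris
words: the root is the empty word, the children of x are x@[i] for i < kappa x,
the parent of x is butlast x, and |x| = length x.\<close>

definition uh_vertices :: "(nat list \<Rightarrow> nat) \<Rightarrow> nat list set" where
  "uh_vertices k = {x. \<forall>i < length x. x ! i < k (take i x)}"

definition biased_step :: "real \<Rightarrow> (nat list \<Rightarrow> nat) \<Rightarrow> nat list \<Rightarrow> nat list pmf" where
  "biased_step lam kappa x =
     (if x = [] then map_pmf (\<lambda>i. [i]) (pmf_of_set {..<kappa []})
      else bind_pmf (bernoulli_pmf (lam / (lam + real (kappa x))))
             (\<lambda>b. if b then return_pmf (butlast x)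
                  else map_pmf (\<lambda>i. x @ [i]) (pmf_of_set {..<kappa x})))"

text \<open>Canonical construction: an outcome is a pair (N, xi), where N u is the
number of children of the particle u (i.i.d. with law mu) and xi (u, x) is an
independent step of the biased walk from x (law biased_step x), used as the
displacement of particle u when its parent sits at x.\<close>

definition gw_tree :: "(nat list \<Rightarrow> nat) \<Rightarrow> nat list set" where
  "gw_tree N = uh_vertices N"

fun pos_rev :: "(nat list \<times> nat list \<Rightarrow> nat list) \<Rightarrow> nat list \<Rightarrow> nat list \<Rightarrow> nat list" where
  "pos_rev \<xi> x0 [] = x0"
| "pos_rev \<xi> x0 (i # ru) = \<xi> (rev (i # ru), pos_rev \<xi> x0 ru)"

definition brw_pos :: "(nat list \<times> nat list \<Rightarrow> nat list) \<Rightarrow> nat list \<Rightarrow> nat list \<Rightarrow> nat list" where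
  "brw_pos \<xi> x0 u = pos_rev \<xi> x0 (rev u)"

text \<open>The law P_omega of the branching random walk (the starting point is
given separately to brw_pos).\<close>
definition brw_measure ::
  "real \<Rightarrow> (nat list \<Rightarrow> nat) \<Rightarrow> nat pmf \<Rightarrow>
     ((nat list \<Rightarrow> nat) \<times> (nat list \<times> nat list \<Rightarrow> nat list)) measure" where
  "brw_measure lam kappa \<mu> =
     (PiM UNIV (\<lambda>_. measure_pmf \<mu>)) \<Otimes>\<^sub>M
     (PiM UNIV (\<lambda>(u, x). measure_pmf (biased_step lam kappa x)))"

end

(*
  Let X be the event that the walk is slower than a, i.e. the complement of the speed event.
  Strong recurrence at the root gives, almost surely, particles at the root in arbitrarily late
  generations. If some particle u at the root had a subtree belonging to the speed event, so
  would the whole tree, since shifting the time by length u does not change the liminf. Hence,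
  on X, the subtree of the first particle at the root after generation K also lies in X. This
  subtree is independent of the first length u generations and has the law of the whole
  process, so P(B \<inter> X) \<le> P(B) P(X) for every event B of the first K generations. Approximating
  X itself by such events gives P(X) \<le> P(X)^2, so P(X) is 0 or 1.
*)

theory Submission
  imports Defs "HOL-Real_Asymp.Real_Asymp"
begin

section \<open>A zero-one law for events almost independent of a filtration\<close>

definition (in prob_space) filtration_approximable :: "(nat \<Rightarrow> 'a measure) \<Rightarrow> 'a set \<Rightarrow> bool" where
  "filtration_approximable F X \<longleftrightarrow> (\<forall>e>0. \<exists>n. \<exists>B\<in>sets (F n). prob (sym_diff X B) < e)"

lemma (in prob_space) filtration_approximable_UN:
  fixes F :: "nat \<Rightarrow> 'a measure" and A :: "nat \<Rightarrow> 'a set"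
  assumes F: "filtration (space M) F" "\<And>n. sets (F n) \<subseteq> events"
    and A_events: "\<And>i. A i \<in> events" and A: "\<And>i. filtration_approximable F (A i)"
  shows "filtration_approximable F (\<Union>i. A i)"
  unfolding filtration_approximable_def
proof (intro allI impI)
  fix e :: real assume "e > 0"
  let ?U = "\<Union>i. A i"
  have "(\<lambda>n. prob (\<Union>i<n. A i)) \<longlonglongrightarrow> prob (\<Union>n. \<Union>i<n. A i)"
  proof (rule finite_Lim_measure_incseq)
    show "range (\<lambda>n. \<Union>i<n. A i) \<subseteq> events" using A_events by blast
    show "incseq (\<lambda>n. \<Union>i<n. A i)"
      unfolding incseq_def by (meson UN_mono lessThan_subset_iff order_refl)
  qed
  moreover have "(\<Union>n. \<Union>i<n. A i) = ?U" by auto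
  ultimately have "\<forall>\<^sub>F n in sequentially. prob ?U - e / 2 < prob (\<Union>i<n. A i)"
    using \<open>e > 0\<close> by (intro order_tendstoD(1)) auto
  then obtain n where n: "prob ?U - prob (\<Union>i<n. A i) < e / 2"
    unfolding eventually_sequentially by (metis diff_less_eq add.commute order_refl)
  define e' where "e' = e / (2 * (n + 1))"
  have "e' > 0" using \<open>e > 0\<close> by (simp add: e'_def)
  then have "\<forall>i. \<exists>k. \<exists>B\<in>sets (F k). prob (sym_diff (A i) B) < e'"
    using A by (auto simp: filtration_approximable_def)
  then obtain k B where B: "\<And>i. B i \<in> sets (F (k i))" "\<And>i. prob (sym_diff (A i) (B i)) < e'"
    by metis
  have B_events: "B i \<in> events" for i using B(1) F(2) by blast
  define K where "K = Max (k ` {..<n})"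
  have "B i \<in> sets (F K)" if "i < n" for i
    using B(1)[of i] filtration.sets_F_mono[OF F(1), of "k i" K] that by (auto simp: K_def)
  then have B_K: "(\<Union>i<n. B i) \<in> sets (F K)" by auto
  have events: "?U \<in> events" "(\<Union>i<n. A i) \<in> events" "(\<Union>i<n. sym_diff (A i) (B i)) \<in> events"
    using A_events B_events by auto
  have "sym_diff ?U (\<Union>i<n. B i) \<subseteq> (?U - (\<Union>i<n. A i)) \<union> (\<Union>i<n. sym_diff (A i) (B i))"
    by blast
  then have "prob (sym_diff ?U (\<Union>i<n. B i))
      \<le> prob ((?U - (\<Union>i<n. A i)) \<union> (\<Union>i<n. sym_diff (A i) (B i)))"
    using events by (intro finite_measure_mono) auto
  also have "\<dots> \<le> prob (?U - (\<Union>i<n. A i)) + prob (\<Union>i<n. sym_diff (A i) (B i))"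
    using events by (intro measure_Un_le) auto
  also have "prob (\<Union>i<n. sym_diff (A i) (B i)) \<le> (\<Sum>i<n. prob (sym_diff (A i) (B i)))"
    using A_events B_events by (intro finite_measure_subadditive_finite) auto
  also have "\<dots> \<le> n * e'"
    using sum_mono[of "{..<n}" "\<lambda>i. prob (sym_diff (A i) (B i))" "\<lambda>_. e'"] B(2)
    by (simp add: less_imp_le)
  also have "prob (?U - (\<Union>i<n. A i)) = prob ?U - prob (\<Union>i<n. A i)"
    using events by (intro finite_measure_Diff) auto
  finally have "prob (sym_diff ?U (\<Union>i<n. B i)) \<le> prob ?U - prob (\<Union>i<n. A i) + n * e'"
    by simp
  moreover have "n * e' < e / 2" using \<open>e > 0\<close> by (simp add: e'_def field_simps)
  ultimately show "\<exists>n. \<exists>B\<in>sets (F n). prob (sym_diff ?U B) < e"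
    using n B_K by (intro exI[of _ K] bexI[of _ "\<Union>i<n. B i"]) auto
qed

lemma (in prob_space) filtration_approximable:
  fixes F :: "nat \<Rightarrow> 'a measure"
  assumes F: "filtration (space M) F" "\<And>n. sets (F n) \<subseteq> events"
    and generated: "events \<subseteq> sigma_sets (space M) (\<Union>n. sets (F n))"
    and X: "X \<in> events"
  shows "filtration_approximable F X"
proof -
  let ?G = "\<Union>n. sets (F n)"
  have G_events: "sigma_sets (space M) ?G \<subseteq> events"
    using F(2) by (intro sets.sigma_sets_subset) auto
  have "Int_stable ?G"
  proof (rule Int_stableI)
    fix A B assume "A \<in> ?G" "B \<in> ?G"
    then obtain m n where "A \<in> sets (F m)" "B \<in> sets (F n)" by auto
    then have "A \<in> sets (F (max m n))" "B \<in> sets (F (max m n))"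
      using filtration.sets_F_mono[OF F(1)] by (meson max.cobounded1 max.cobounded2 subsetD)+
    then show "A \<inter> B \<in> ?G" by blast
  qed
  moreover have "?G \<subseteq> Pow (space M)" using F(2) sets.sets_into_space by blast
  moreover have "X \<in> sigma_sets (space M) ?G" using X generated by blast
  ultimately show ?thesis
  proof (induction rule: sigma_sets_induct_disjoint)
    case (basic A)
    then obtain n where "A \<in> sets (F n)" by blast
    then show ?case by (auto simp: filtration_approximable_def intro!: exI[of _ n] bexI[of _ A])
  next
    case empty
    show ?case by (auto simp: filtration_approximable_def intro!: exI[of _ 0] bexI[of _ "{}"])
  next
    case (compl A)
    have "sym_diff (space M - A) (space (F n) - B) = sym_diff A B" if "B \<in> sets (F n)" for n B
    proof -
      have "A \<subseteq> space M" using compl.hyps G_events sets.sets_into_space by blast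
      moreover have "B \<subseteq> space M" using that F(2) sets.sets_into_space by blast
      ultimately show ?thesis using filtration.space_F[OF F(1)] by blast
    qed
    then show ?case
      using compl.IH unfolding filtration_approximable_def by (metis sets.compl_sets)
  next
    case (union A)
    have "A i \<in> events" for i using union.hyps(2) G_events by blast
    then show ?case by (rule filtration_approximable_UN[OF F _ union.IH])
  qed
qed

lemma (in prob_space) zero_one_law_filtration:
  fixes F :: "nat \<Rightarrow> 'a measure"
  assumes F: "filtration (space M) F" "\<And>n. sets (F n) \<subseteq> events"
    and generated: "events \<subseteq> sigma_sets (space M) (\<Union>n. sets (F n))"
    and X: "X \<in> events"
    and indep: "\<And>n B. B \<in> sets (F n) \<Longrightarrow> prob (B \<inter> X) \<le> prob B * prob X"
  shows "prob X = 0 \<or> prob X = 1"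
proof -
  let ?q = "prob X"
  have approx: "?q \<le> ?q * ?q + 2 * e" if "e > 0" for e
  proof -
    obtain n B where B: "B \<in> sets (F n)" "prob (sym_diff X B) < e"
      using filtration_approximable[OF F generated X] \<open>e > 0\<close>
      unfolding filtration_approximable_def by blast
    have B_event: "B \<in> events" using B(1) F(2) by blast
    have "?q \<le> prob ((B \<inter> X) \<union> sym_diff X B)"
      using B_event X by (intro finite_measure_mono) auto
    also have "\<dots> \<le> prob (B \<inter> X) + prob (sym_diff X B)"
      using B_event X by (intro measure_Un_le) auto
    finally have q_le: "?q \<le> prob (B \<inter> X) + e" using B(2) by linarith
    have "prob B \<le> prob (X \<union> sym_diff X B)"
      using B_event X by (intro finite_measure_mono) auto
    also have "\<dots> \<le> ?q + prob (sym_diff X B)"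
      using B_event X by (intro measure_Un_le) auto
    finally have "prob B \<le> ?q + e" using B(2) by linarith
    then have "prob (B \<inter> X) \<le> (?q + e) * ?q"
      using indep[OF B(1)] mult_right_mono[of "prob B" "?q + e" ?q] by simp
    also have "\<dots> \<le> ?q * ?q + e"
      using \<open>e > 0\<close> by (simp add: distrib_right mult_left_le_one_le)
    finally show ?thesis using q_le by linarith
  qed
  have "?q \<le> ?q * ?q"
  proof (rule field_le_epsilon)
    fix e :: real assume "e > 0"
    then show "?q \<le> ?q * ?q + e" using approx[of "e / 2"] by simp
  qed
  moreover have "?q * ?q \<le> ?q" by (simp add: mult_left_le_one_le)
  ultimately have "?q * (1 - ?q) = 0" by (simp add: algebra_simps)
  then show ?thesis by simp
qed


section \<open>Coordinates of the canonical space of the branching random walk\<close>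

lemma PiM_pmf_cylinder_in_sets:
  fixes p :: "'i \<Rightarrow> 'a pmf"
  assumes "finite J"
  shows "{f. \<forall>i\<in>J. f i \<in> B i} \<in> sets (PiM UNIV (\<lambda>i. measure_pmf (p i)))"
proof -
  have "{f. \<forall>i\<in>J. f i \<in> B i} = prod_emb UNIV (\<lambda>i. measure_pmf (p i)) J (Pi\<^sub>E J B)"
    by (auto simp: prod_emb_def space_PiM)
  then show ?thesis using assms by (auto intro!: sets_PiM_I)
qed

lemma emeasure_PiM_pmf_cylinder:
  fixes p :: "'i \<Rightarrow> 'a pmf"
  assumes "finite J"
  shows "emeasure (PiM UNIV (\<lambda>i. measure_pmf (p i))) {f. \<forall>i\<in>J. f i \<in> B i}
    = (\<Prod>i\<in>J. emeasure (measure_pmf (p i)) (B i))"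
proof -
  have "{f. \<forall>i\<in>J. f i \<in> B i} = prod_emb UNIV (\<lambda>i. measure_pmf (p i)) J (Pi\<^sub>E J B)"
    by (auto simp: prod_emb_def space_PiM)
  then show ?thesis using assms by (simp add: emeasure_PiM_emb prob_space_measure_pmf)
qed

lemma measurable_PiM_pmf_reindex:
  fixes p :: "'i \<Rightarrow> 'a pmf"
  assumes "\<And>i. p (f i) = p i"
  shows "(\<lambda>\<omega> i. \<omega> (f i)) \<in> measurable (PiM UNIV (\<lambda>i. measure_pmf (p i))) (PiM UNIV (\<lambda>i. measure_pmf (p i)))"
proof (rule measurable_PiM_single')
  fix i
  show "(\<lambda>\<omega>. \<omega> (f i)) \<in> measurable (PiM UNIV (\<lambda>i. measure_pmf (p i))) (measure_pmf (p i))"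
    using measurable_component_singleton[of "f i" UNIV "\<lambda>i. measure_pmf (p i)"] by (simp add: assms)
qed (simp add: space_PiM)

lemma distr_PiM_pmf_reindex:
  fixes p :: "'i \<Rightarrow> 'a pmf"
  assumes "inj f" "\<And>i. p (f i) = p i"
  shows "distr (PiM UNIV (\<lambda>i. measure_pmf (p i))) (PiM UNIV (\<lambda>i. measure_pmf (p i))) (\<lambda>\<omega> i. \<omega> (f i))
    = PiM UNIV (\<lambda>i. measure_pmf (p i))"
proof -
  have "distr (PiM UNIV (\<lambda>i. measure_pmf (p i))) (PiM UNIV (\<lambda>i. measure_pmf (p (f i))))
      (\<lambda>\<omega>. \<lambda>i\<in>UNIV. \<omega> (f i)) = PiM UNIV (\<lambda>i. measure_pmf (p (f i)))"
    using assms(1) by (intro distr_PiM_reindex) (auto simp: prob_space_measure_pmf)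
  then show ?thesis by (simp add: assms(2) restrict_UNIV)
qed

type_synonym brw_outcome = "(nat list \<Rightarrow> nat) \<times> (nat list \<times> nat list \<Rightarrow> nat list)"
type_synonym brw_index = "nat list + nat list \<times> nat list"

definition coord :: "brw_index \<Rightarrow> brw_outcome \<Rightarrow> nat + nat list" where
  "coord i \<omega> = (case i of Inl w \<Rightarrow> Inl (fst \<omega> w) | Inr p \<Rightarrow> Inr (snd \<omega> p))"

definition coord_algebra :: "brw_index set \<Rightarrow> brw_outcome measure" where
  "coord_algebra I = sigma UNIV {coord i -` A | i A. i \<in> I}"

lemma space_coord_algebra [simp]: "space (coord_algebra I) = UNIV"
  by (simp add: coord_algebra_def space_measure_of_conv)

lemma sets_coord_algebra: "sets (coord_algebra I) = sigma_sets UNIV {coord i -` A | i A. i \<in> I}"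
  unfolding coord_algebra_def by (rule sets_measure_of) auto

lemma coord_algebra_mono: "I \<subseteq> J \<Longrightarrow> sets (coord_algebra I) \<subseteq> sets (coord_algebra J)"
  unfolding sets_coord_algebra by (intro sigma_sets_mono') auto

lemma measurable_coord_algebra:
  "i \<in> I \<Longrightarrow> coord i \<in> measurable (coord_algebra I) (count_space UNIV)"
  by (auto simp: measurable_def sets_coord_algebra)

lemma measurable_offspring_coord_algebra:
  "Inl w \<in> I \<Longrightarrow> (\<lambda>\<omega>. fst \<omega> w) \<in> measurable (coord_algebra I) (count_space UNIV)"
  using measurable_compose[OF measurable_coord_algebra measurable_count_space, of "Inl w" I projl]
  by (simp add: coord_def)

lemma measurable_step_coord_algebra:
  "Inr p \<in> I \<Longrightarrow> (\<lambda>\<omega>. snd \<omega> p) \<in> measurable (coord_algebra I) (count_space UNIV)"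
  using measurable_compose[OF measurable_coord_algebra measurable_count_space, of "Inr p" I projr]
  by (simp add: coord_def)

locale brw_space =
  fixes lam :: real and kappa :: "nat list \<Rightarrow> nat" and \<mu> :: "nat pmf"
begin

abbreviation "BRW \<equiv> brw_measure lam kappa \<mu>"
abbreviation "Offspring \<equiv> PiM (UNIV :: nat list set) (\<lambda>_. measure_pmf \<mu>)"
abbreviation "Steps \<equiv> PiM UNIV (\<lambda>p :: nat list \<times> nat list. measure_pmf (biased_step lam kappa (snd p)))"

lemma BRW_eq: "BRW = Offspring \<Otimes>\<^sub>M Steps"
  by (simp add: brw_measure_def case_prod_beta')

lemma prob_space_Steps: "prob_space Steps"
  by (intro prob_space_PiM) (simp add: prob_space_measure_pmf)

sublocale prob_space BRW
  unfolding BRW_eq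
  by (intro prob_space_pair prob_space_PiM prob_space_Steps) (simp add: prob_space_measure_pmf)

lemma space_BRW [simp]: "space BRW = UNIV"
  by (simp add: BRW_eq space_pair_measure space_PiM)

lemma measurable_offspring [measurable]: "(\<lambda>\<omega>. fst \<omega> w) \<in> measurable BRW (count_space UNIV)"
proof -
  have "(\<lambda>\<omega>. fst \<omega> w) \<in> measurable BRW (measure_pmf \<mu>)"
    unfolding BRW_eq by measurable
  then show ?thesis by (simp add: measurable_cong_sets[OF refl sets_measure_pmf_count_space])
qed

lemma measurable_step [measurable]: "(\<lambda>\<omega>. snd \<omega> p) \<in> measurable BRW (count_space UNIV)"
proof -
  have "(\<lambda>\<omega>. snd \<omega> p) \<in> measurable BRW (measure_pmf (biased_step lam kappa (snd p)))"
    unfolding BRW_eq by measurable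
  then show ?thesis by (simp add: measurable_cong_sets[OF refl sets_measure_pmf_count_space])
qed

lemma coord_vimage_events: "coord i -` A \<in> events"
proof -
  have "coord i \<in> measurable BRW (count_space UNIV)"
    by (cases i) (simp_all add: coord_def[abs_def])
  then show ?thesis using measurable_sets[of "coord i" BRW "count_space UNIV" A] by simp
qed

lemma sets_coord_algebra_subset_events: "sets (coord_algebra I) \<subseteq> events"
  unfolding sets_coord_algebra using coord_vimage_events sets.top[of BRW]
  by (intro sets.sigma_sets_subset') auto

lemma measurable_to_BRW:
  assumes "\<And>w. (\<lambda>x. fst (f x) w) \<in> measurable M (count_space UNIV)"
    and "\<And>p. (\<lambda>x. snd (f x) p) \<in> measurable M (count_space UNIV)"
  shows "f \<in> measurable M BRW"
proof -
  have "(\<lambda>x. fst (f x)) \<in> measurable M Offspring"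
    using assms(1) by (intro measurable_PiM_single')
      (auto simp: measurable_cong_sets[OF refl sets_measure_pmf_count_space] space_PiM)
  moreover have "(\<lambda>x. snd (f x)) \<in> measurable M Steps"
    using assms(2) by (intro measurable_PiM_single')
      (auto simp: measurable_cong_sets[OF refl sets_measure_pmf_count_space] space_PiM)
  ultimately have "(\<lambda>x. (fst (f x), snd (f x))) \<in> measurable M BRW"
    unfolding BRW_eq by (rule measurable_Pair)
  then show ?thesis by simp
qed

lemma events_eq_coord_algebra: "events = sets (coord_algebra UNIV)"
proof
  have "id \<in> measurable (coord_algebra UNIV) BRW"
    by (rule measurable_to_BRW)
      (auto intro: measurable_offspring_coord_algebra measurable_step_coord_algebra)
  then show "events \<subseteq> sets (coord_algebra UNIV)"
    using measurable_sets[of id "coord_algebra UNIV" BRW] by fastforce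
qed (rule sets_coord_algebra_subset_events)

lemma emeasure_coord_cylinder_eq:
  assumes "finite J"
  shows "emeasure BRW (\<Inter>j\<in>J. coord j -` S j) =
    (\<Prod>w\<in>{w. Inl w \<in> J}. emeasure \<mu> {n. Inl n \<in> S (Inl w)}) *
    (\<Prod>p\<in>{p. Inr p \<in> J}. emeasure (biased_step lam kappa (snd p)) {y. Inr y \<in> S (Inr p)})"
proof -
  let ?J1 = "{w. Inl w \<in> J}" and ?J2 = "{p. Inr p \<in> J}"
  have fin: "finite ?J1" "finite ?J2"
    using finite_vimageI[OF assms, of Inl] finite_vimageI[OF assms, of Inr] by (simp_all add: vimage_def)
  let ?C1 = "{f. \<forall>w\<in>?J1. f w \<in> {n. Inl n \<in> S (Inl w)}}"
    and ?C2 = "{g. \<forall>p\<in>?J2. g p \<in> {y. Inr y \<in> S (Inr p)}}"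
  interpret Steps: prob_space Steps by (rule prob_space_Steps)
  have "(\<Inter>j\<in>J. coord j -` S j) = ?C1 \<times> ?C2"
  proof (intro set_eqI iffI)
    fix \<omega> assume "\<omega> \<in> (\<Inter>j\<in>J. coord j -` S j)"
    then show "\<omega> \<in> ?C1 \<times> ?C2" by (cases \<omega>) (auto simp: coord_def)
  next
    fix \<omega> assume "\<omega> \<in> ?C1 \<times> ?C2"
    then show "\<omega> \<in> (\<Inter>j\<in>J. coord j -` S j)" by (auto simp: coord_def split: sum.splits)
  qed
  moreover have "emeasure BRW (?C1 \<times> ?C2) = emeasure Offspring ?C1 * emeasure Steps ?C2"
    unfolding BRW_eq using fin by (intro Steps.emeasure_pair_measure_Times PiM_pmf_cylinder_in_sets)
  ultimately show ?thesis using fin by (simp only: emeasure_PiM_pmf_cylinder)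
qed

lemma emeasure_coord_cylinder:
  assumes "finite J"
  shows "emeasure BRW (\<Inter>j\<in>J. coord j -` S j) = (\<Prod>j\<in>J. emeasure BRW (coord j -` S j))"
proof -
  let ?J1 = "{w. Inl w \<in> J}" and ?J2 = "{p. Inr p \<in> J}"
  have fin: "finite ?J1" "finite ?J2"
    using finite_vimageI[OF assms, of Inl] finite_vimageI[OF assms, of Inr] by (simp_all add: vimage_def)
  have J: "J = Inl ` ?J1 \<union> Inr ` ?J2"
  proof (rule set_eqI)
    show "j \<in> J \<longleftrightarrow> j \<in> Inl ` ?J1 \<union> Inr ` ?J2" for j by (cases j) auto
  qed
  have single_Inl: "emeasure BRW (coord (Inl w) -` A) = emeasure \<mu> {n. Inl n \<in> A}" for w A
    using emeasure_coord_cylinder_eq[of "{Inl w}" "\<lambda>_. A"] by simp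
  have single_Inr: "emeasure BRW (coord (Inr p) -` A)
      = emeasure (biased_step lam kappa (snd p)) {y. Inr y \<in> A}" for p A
    using emeasure_coord_cylinder_eq[of "{Inr p}" "\<lambda>_. A"] by simp
  have "(\<Prod>j\<in>J. emeasure BRW (coord j -` S j))
      = (\<Prod>j\<in>Inl ` ?J1. emeasure BRW (coord j -` S j)) * (\<Prod>j\<in>Inr ` ?J2. emeasure BRW (coord j -` S j))"
    using fin by (subst J, intro prod.union_disjoint) auto
  also have "\<dots> = emeasure BRW (\<Inter>j\<in>J. coord j -` S j)"
    using assms by (simp add: prod.reindex single_Inl single_Inr emeasure_coord_cylinder_eq)
  finally show ?thesis ..
qed

lemma indep_coords: "indep_sets (\<lambda>i. {coord i -` A | A. True}) UNIV"
proof (rule indep_setsI)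
  show "{coord i -` A | A. True} \<subseteq> events" for i using coord_vimage_events by auto
next
  fix J :: "brw_index set" and E
  assume J: "J \<noteq> {}" "finite J" and E: "\<forall>j\<in>J. E j \<in> {coord j -` A | A. True}"
  then have "\<forall>j\<in>J. \<exists>A. E j = coord j -` A" by blast
  from bchoice[OF this] obtain S where S: "\<forall>j\<in>J. E j = coord j -` S j" ..
  have "(\<Inter>j\<in>J. E j) = (\<Inter>j\<in>J. coord j -` S j)"
    using S by (intro INF_cong) auto
  moreover have "(\<Prod>j\<in>J. emeasure BRW (E j)) = (\<Prod>j\<in>J. emeasure BRW (coord j -` S j))"
    using S by (intro prod.cong) auto
  ultimately have "emeasure BRW (\<Inter>j\<in>J. E j) = (\<Prod>j\<in>J. emeasure BRW (E j))"
    using emeasure_coord_cylinder[OF J(2)] by simp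
  then have "ennreal (prob (\<Inter>j\<in>J. E j)) = ennreal (\<Prod>j\<in>J. prob (E j))"
    by (simp add: emeasure_eq_measure prod_ennreal)
  then show "prob (\<Inter>j\<in>J. E j) = (\<Prod>j\<in>J. prob (E j))"
    by (rule ennreal_inj[THEN iffD1, rotated 2]) (simp_all add: prod_nonneg)
qed

lemma prob_Int_coord_algebra:
  assumes "I \<inter> J = {}" "S \<in> sets (coord_algebra I)" "T \<in> sets (coord_algebra J)"
  shows "prob (S \<inter> T) = prob S * prob T"
proof -
  let ?K = "\<lambda>b. if b then I else J"
  have "indep_sets (\<lambda>b. sigma_sets (space BRW) (\<Union>i\<in>?K b. {coord i -` A | A. True})) UNIV"
  proof (rule indep_sets_collect_sigma)
    show "indep_sets (\<lambda>i. {coord i -` A | A. True}) (\<Union>b. ?K b)"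
      by (rule indep_sets_mono_index[OF _ indep_coords]) simp
    show "Int_stable {coord i -` A | A. True}" for i
      by (auto simp: Int_stable_def) (metis vimage_Int)
    show "disjoint_family ?K"
      using assms(1) by (auto simp: disjoint_family_on_def)
  qed
  moreover have "(\<Union>i\<in>K. {coord i -` A | A. True}) = {coord i -` A | i A. i \<in> K}" for K
    by auto
  ultimately have "indep_set (sets (coord_algebra I)) (sets (coord_algebra J))"
    unfolding indep_set_def
    by (elim indep_sets_cong[THEN iffD1, rotated 2]) (auto simp: sets_coord_algebra split: bool.split)
  then show ?thesis using indep_setD assms(2,3) by blast
qed

end

section \<open>Galton--Watson trees, positions and the speed of the walk\<close>

lemma Nil_in_gw_tree [simp]: "[] \<in> gw_tree N"
  by (simp add: gw_tree_def uh_vertices_def)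

lemma snoc_in_gw_tree_iff: "u @ [i] \<in> gw_tree N \<longleftrightarrow> u \<in> gw_tree N \<and> i < N u"
  by (auto simp: gw_tree_def uh_vertices_def nth_append less_Suc_eq)

lemma gw_tree_cong:
  "(\<And>k. k < length u \<Longrightarrow> N (take k u) = N' (take k u)) \<Longrightarrow> u \<in> gw_tree N \<longleftrightarrow> u \<in> gw_tree N'"
  by (simp add: gw_tree_def uh_vertices_def)

lemma append_in_gw_tree_iff:
  assumes "u \<in> gw_tree N"
  shows "u @ v \<in> gw_tree N \<longleftrightarrow> v \<in> gw_tree (\<lambda>w. N (u @ w))"
  by (induction v rule: rev_induct)
    (simp_all add: assms snoc_in_gw_tree_iff flip: append_assoc)

definition gw_level :: "(nat list \<Rightarrow> nat) \<Rightarrow> nat \<Rightarrow> nat list set" where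
  "gw_level N n = {u \<in> gw_tree N. length u = n}"

lemma finite_gw_level: "finite (gw_level N n)"
proof (induction n)
  case 0
  have "gw_level N 0 \<subseteq> {[]}" by (auto simp: gw_level_def)
  then show ?case by (rule finite_subset) simp
next
  case (Suc n)
  have "gw_level N (Suc n) \<subseteq> (\<Union>u\<in>gw_level N n. (\<lambda>i. u @ [i]) ` {..<N u})"
  proof
    fix v assume v: "v \<in> gw_level N (Suc n)"
    then have "length v = Suc n" by (simp add: gw_level_def)
    then obtain u i where "v = u @ [i]" by (cases v rule: rev_cases) auto
    with v show "v \<in> (\<Union>u\<in>gw_level N n. (\<lambda>i. u @ [i]) ` {..<N u})"
      by (auto simp: gw_level_def snoc_in_gw_tree_iff)
  qed
  then show ?case by (rule finite_subset) (use Suc.IH in blast)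
qed

lemma replicate_in_gw_level: "(\<And>w. 1 \<le> N w) \<Longrightarrow> replicate n 0 \<in> gw_level N n"
  by (auto simp: gw_level_def gw_tree_def uh_vertices_def Suc_le_eq)

lemma brw_pos_Nil [simp]: "brw_pos \<xi> x [] = x"
  by (simp add: brw_pos_def)

lemma brw_pos_snoc [simp]: "brw_pos \<xi> x (u @ [i]) = \<xi> (u @ [i], brw_pos \<xi> x u)"
  by (simp add: brw_pos_def)

lemma brw_pos_cong:
  "(\<And>k y. 0 < k \<Longrightarrow> k \<le> length u \<Longrightarrow> \<xi> (take k u, y) = \<xi>' (take k u, y))
    \<Longrightarrow> brw_pos \<xi> x u = brw_pos \<xi>' x u"
proof (induction u rule: rev_induct)
  case (snoc i u)
  have "brw_pos \<xi> x u = brw_pos \<xi>' x u"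
  proof (rule snoc.IH)
    fix k y assume "0 < k" "k \<le> length u"
    then show "\<xi> (take k u, y) = \<xi>' (take k u, y)" using snoc.prems[of k y] by simp
  qed
  then show ?case using snoc.prems[of "Suc (length u)"] by simp
qed simp

lemma brw_pos_append:
  "brw_pos \<xi> x (u @ v) = brw_pos (\<lambda>(w, y). \<xi> (u @ w, y)) (brw_pos \<xi> x u) v"
  by (induction v rule: rev_induct) (simp_all flip: append_assoc)

(* Max of an empty level is unspecified; levels are nonempty once every particle has a child. *)
definition max_speed :: "nat \<Rightarrow> brw_outcome \<Rightarrow> real" where
  "max_speed n \<omega> = Max ((\<lambda>u. real (length (brw_pos (snd \<omega>) [] u)) / real n) ` gw_level (fst \<omega>) n)"

definition speed_event :: "real \<Rightarrow> brw_outcome set" where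
  "speed_event a = {\<omega>. ereal a \<le> liminf (\<lambda>n. ereal (max_speed n \<omega>))}"

definition subtree_outcome :: "nat list \<Rightarrow> brw_outcome \<Rightarrow> brw_outcome" where
  "subtree_outcome u \<omega> = (\<lambda>v. fst \<omega> (u @ v), \<lambda>(v, y). snd \<omega> (u @ v, y))"

lemma max_speed_subtree_le:
  assumes u: "u \<in> gw_tree (fst \<omega>)" "brw_pos (snd \<omega>) [] u = []"
    and offspring: "\<And>w. 1 \<le> fst \<omega> w" and n: "0 < n"
  shows "real n / real (n + length u) * max_speed n (subtree_outcome u \<omega>)
    \<le> max_speed (n + length u) \<omega>"
proof -
  let ?\<omega>' = "subtree_outcome u \<omega>"
  have "gw_level (fst ?\<omega>') n \<noteq> {}"
    using replicate_in_gw_level[of "fst ?\<omega>'" n] offspring by (auto simp: subtree_outcome_def)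
  then obtain v where v: "v \<in> gw_level (fst ?\<omega>') n"
    and max_v: "max_speed n ?\<omega>' = real (length (brw_pos (snd ?\<omega>') [] v)) / real n"
    using Max_in[OF finite_imageI[OF finite_gw_level]] unfolding max_speed_def by blast
  have "u @ v \<in> gw_level (fst \<omega>) (n + length u)"
    using v append_in_gw_tree_iff[OF u(1)] by (simp add: gw_level_def subtree_outcome_def)
  moreover have "brw_pos (snd \<omega>) [] (u @ v) = brw_pos (snd ?\<omega>') [] v"
    using u(2) by (simp add: brw_pos_append subtree_outcome_def)
  ultimately have "real (length (brw_pos (snd ?\<omega>') [] v)) / real (n + length u)
      \<le> max_speed (n + length u) \<omega>"
    unfolding max_speed_def by (metis (mono_tags, lifting) Max_ge finite_gw_level finite_imageI image_eqI)
  then show ?thesis using n by (simp add: max_v)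
qed

lemma speed_event_of_subtree_at_root:
  assumes u: "u \<in> gw_tree (fst \<omega>)" "brw_pos (snd \<omega>) [] u = []"
    and offspring: "\<And>w. 1 \<le> fst \<omega> w"
    and subtree: "subtree_outcome u \<omega> \<in> speed_event a"
  shows "\<omega> \<in> speed_event a"
proof -
  let ?g = "length u" and ?\<omega>' = "subtree_outcome u \<omega>"
  have "(\<lambda>n. real n / real (n + ?g)) \<longlonglongrightarrow> 1" by real_asymp
  then have "liminf (\<lambda>n. ereal (real n / real (n + ?g)) * ereal (max_speed n ?\<omega>'))
      = liminf (\<lambda>n. ereal (max_speed n ?\<omega>'))"
    by (subst ereal_liminf_lim_mult[where a = 1]) (auto simp: one_ereal_def)
  then have "ereal a \<le> liminf (\<lambda>n. ereal (real n / real (n + ?g) * max_speed n ?\<omega>'))"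
    using subtree by (simp add: speed_event_def)
  also have "\<dots> \<le> liminf (\<lambda>n. ereal (max_speed (n + ?g) \<omega>))"
    using eventually_gt_at_top[of 0]
    by (rule Liminf_mono[OF eventually_mono]) (metis ereal_less_eq(3) max_speed_subtree_le[OF u offspring])
  also have "\<dots> = liminf (\<lambda>n. ereal (max_speed n \<omega>))"
    by (rule liminf_shift_k)
  finally show ?thesis by (simp add: speed_event_def)
qed

section \<open>Subtrees and the first return to the root\<close>

definition truncate_outcome :: "nat \<Rightarrow> brw_outcome \<Rightarrow> brw_outcome" where
  "truncate_outcome g \<omega> =
    (\<lambda>w. if length w < g then fst \<omega> w else 1, \<lambda>p. if length (fst p) \<le> g then snd \<omega> p else [])"

(* The steps indexed by the root word are never read by brw_pos. In a subtree outcome they are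
   the step into u, which belongs to the first length u generations; dropping them is what makes
   the subtree events independent of those generations. *)
definition forget_root_steps :: "brw_outcome \<Rightarrow> brw_outcome" where
  "forget_root_steps \<omega> = (fst \<omega>, \<lambda>(v, y). if v = [] then [] else snd \<omega> (v, y))"

lemma gw_tree_truncate_outcome:
  "length u \<le> g \<Longrightarrow> u \<in> gw_tree (fst (truncate_outcome g \<omega>)) \<longleftrightarrow> u \<in> gw_tree (fst \<omega>)"
  by (rule gw_tree_cong) (simp add: truncate_outcome_def)

lemma brw_pos_truncate_outcome:
  "length u \<le> g \<Longrightarrow> brw_pos (snd (truncate_outcome g \<omega>)) x u = brw_pos (snd \<omega>) x u"
  by (rule brw_pos_cong) (simp add: truncate_outcome_def)

lemma fst_forget_root_steps [simp]: "fst (forget_root_steps \<omega>) = fst \<omega>"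
  by (simp add: forget_root_steps_def)

lemma brw_pos_forget_root_steps [simp]:
  "brw_pos (snd (forget_root_steps \<omega>)) x u = brw_pos (snd \<omega>) x u"
  by (rule brw_pos_cong) (auto simp: forget_root_steps_def)

lemma vimage_forget_root_steps_speed_event [simp]:
  "forget_root_steps -` speed_event a = speed_event a"
  by (simp add: speed_event_def max_speed_def vimage_def)

(* xi (w, x) is the step that moves w itself, so positions up to generation g use the steps
   indexed by words of length at most g, while the tree needs only the offspring numbers below g. *)
definition coords_upto :: "nat \<Rightarrow> brw_index set" where
  "coords_upto g = Inl ` {w. length w < g} \<union> Inr ` {p. length (fst p) \<le> g}"

definition subtree_coords :: "nat list \<Rightarrow> brw_index set" where
  "subtree_coords u = Inl ` {w. \<exists>v. w = u @ v} \<union> Inr ` {p. \<exists>v. v \<noteq> [] \<and> fst p = u @ v}"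

lemma coords_upto_Int_subtree_coords: "coords_upto (length u) \<inter> subtree_coords u = {}"
  by (auto simp: coords_upto_def subtree_coords_def)

lemma coords_upto_mono: "g \<le> g' \<Longrightarrow> coords_upto g \<subseteq> coords_upto g'"
  by (auto simp: coords_upto_def)

context brw_space
begin

lemma measurable_gw_tree [measurable]: "Measurable.pred BRW (\<lambda>\<omega>. u \<in> gw_tree (fst \<omega>))"
  unfolding gw_tree_def uh_vertices_def by measurable

lemma measurable_brw_pos [measurable]:
  "(\<lambda>\<omega>. brw_pos (snd \<omega>) x u) \<in> measurable BRW (count_space UNIV)"
proof (induction u rule: rev_induct)
  case (snoc i u)
  have "(\<lambda>\<omega>. (\<lambda>y \<omega>. snd \<omega> (u @ [i], y)) (brw_pos (snd \<omega>) x u) \<omega>) \<in> measurable BRW (count_space UNIV)"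
    by (rule measurable_compose_countable'[OF _ snoc.IH]) auto
  then show ?case by simp
qed simp

lemma measurable_gw_level: "(\<lambda>\<omega>. gw_level (fst \<omega>) n) \<in> measurable BRW (count_space (Collect finite))"
proof (subst measurable_count_space_eq_countable)
  show "countable (Collect finite :: nat list set set)" by (rule countable_Collect_finite)
  show "(\<lambda>\<omega>. gw_level (fst \<omega>) n) \<in> space BRW \<rightarrow> Collect finite \<and>
    (\<forall>L\<in>Collect finite. (\<lambda>\<omega>. gw_level (fst \<omega>) n) -` {L} \<inter> space BRW \<in> events)"
  proof (intro conjI ballI)
    fix L :: "nat list set"
    have "Measurable.pred BRW (\<lambda>\<omega>. \<forall>u. (u \<in> L \<longrightarrow> u \<in> gw_tree (fst \<omega>) \<and> length u = n) \<and>
        (u \<in> gw_tree (fst \<omega>) \<and> length u = n \<longrightarrow> u \<in> L))"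
      by measurable
    moreover have "(\<lambda>\<omega>. gw_level (fst \<omega>) n) -` {L} \<inter> space BRW
      = {\<omega> \<in> space BRW. \<forall>u. (u \<in> L \<longrightarrow> u \<in> gw_tree (fst \<omega>) \<and> length u = n) \<and>
          (u \<in> gw_tree (fst \<omega>) \<and> length u = n \<longrightarrow> u \<in> L)}"
      by (auto simp: gw_level_def)
    ultimately show "(\<lambda>\<omega>. gw_level (fst \<omega>) n) -` {L} \<inter> space BRW \<in> events"
      by (simp only: pred_def)
  qed (auto simp: finite_gw_level)
qed

lemma borel_measurable_max_speed [measurable]: "max_speed n \<in> borel_measurable BRW"
proof -
  have "(\<lambda>\<omega>. (\<lambda>L \<omega>. Max ((\<lambda>u. real (length (brw_pos (snd \<omega>) [] u)) / real n) ` L))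
      (gw_level (fst \<omega>) n) \<omega>) \<in> borel_measurable BRW"
    by (rule measurable_compose_countable'[OF _ measurable_gw_level countable_Collect_finite])
      (intro borel_measurable_Max; auto)
  then show ?thesis by (simp add: max_speed_def[abs_def])
qed

lemma speed_event_in_events: "speed_event a \<in> events"
proof -
  have "Measurable.pred BRW (\<lambda>\<omega>. ereal a \<le> liminf (\<lambda>n. ereal (max_speed n \<omega>)))"
    by measurable
  then show ?thesis by (simp add: speed_event_def pred_def)
qed

end

definition returns_after :: "nat \<Rightarrow> brw_outcome \<Rightarrow> nat list \<Rightarrow> bool" where
  "returns_after K \<omega> v \<longleftrightarrow> v \<in> gw_tree (fst \<omega>) \<and> K \<le> length v \<and> brw_pos (snd \<omega>) [] v = []"

(* Ordering the returning particles by generation first makes first_return K u depend only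
   on the first length u generations. *)
definition first_return :: "nat \<Rightarrow> nat list \<Rightarrow> brw_outcome set" where
  "first_return K u = {\<omega>. returns_after K \<omega> u \<and>
    (\<forall>v. returns_after K \<omega> v \<longrightarrow> (v, u) \<notin> measures [length, to_nat])}"

lemma first_return_unique:
  assumes "\<omega> \<in> first_return K u" "\<omega> \<in> first_return K u'"
  shows "u = u'"
proof -
  have "(u', u) \<notin> measures [length, to_nat]" "(u, u') \<notin> measures [length, to_nat]"
    using assms by (auto simp: first_return_def simp del: in_measures)
  then have "to_nat u = to_nat u'" by auto
  then show ?thesis by (rule injD[OF inj_to_nat])
qed

lemma ex_first_return:
  assumes "returns_after K \<omega> v"
  obtains u where "\<omega> \<in> first_return K u"
proof -
  obtain u where "u \<in> Collect (returns_after K \<omega>)"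
    "\<And>v. (v, u) \<in> measures [length, to_nat] \<Longrightarrow> v \<notin> Collect (returns_after K \<omega>)"
    by (rule wfE_min[OF wf_measures[of "[length, to_nat]"] CollectI[of "returns_after K \<omega>", OF assms]]) blast
  then show thesis using that by (auto simp: first_return_def simp del: in_measures)
qed

lemma vimage_truncate_outcome_first_return:
  "truncate_outcome (length u) -` first_return K u = first_return K u"
proof (intro set_eqI)
  fix \<omega>
  let ?\<omega>' = "truncate_outcome (length u) \<omega>" and ?R = "measures [length, to_nat]"
  have same: "returns_after K ?\<omega>' v \<longleftrightarrow> returns_after K \<omega> v" if "length v \<le> length u" for v
    using that by (simp add: returns_after_def gw_tree_truncate_outcome brw_pos_truncate_outcome)
  have "(returns_after K ?\<omega>' v \<longrightarrow> (v, u) \<notin> ?R) \<longleftrightarrow> (returns_after K \<omega> v \<longrightarrow> (v, u) \<notin> ?R)" for v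
  proof (cases "(v, u) \<in> ?R")
    case True
    then have "length v \<le> length u" by auto
    then show ?thesis using same by blast
  qed simp
  then show "\<omega> \<in> truncate_outcome (length u) -` first_return K u \<longleftrightarrow> \<omega> \<in> first_return K u"
    using same[of u] by (simp add: first_return_def del: in_measures)
qed

context brw_space
begin

lemma vimage_in_coord_algebra:
  "f \<in> measurable (coord_algebra I) BRW \<Longrightarrow> S \<in> events \<Longrightarrow> f -` S \<in> sets (coord_algebra I)"
  using measurable_sets[of f "coord_algebra I" BRW S] by simp

lemma measurable_truncate_outcome:
  "truncate_outcome g \<in> measurable (coord_algebra (coords_upto g)) BRW"
proof (rule measurable_to_BRW)
  fix w
  show "(\<lambda>\<omega>. fst (truncate_outcome g \<omega>) w) \<in> measurable (coord_algebra (coords_upto g)) (count_space UNIV)"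
    by (cases "length w < g")
      (auto simp: truncate_outcome_def coords_upto_def intro: measurable_offspring_coord_algebra)
next
  fix p
  show "(\<lambda>\<omega>. snd (truncate_outcome g \<omega>) p) \<in> measurable (coord_algebra (coords_upto g)) (count_space UNIV)"
    by (cases "length (fst p) \<le> g")
      (auto simp: truncate_outcome_def coords_upto_def intro: measurable_step_coord_algebra)
qed

lemma measurable_forget_root_steps_subtree_outcome:
  "(\<lambda>\<omega>. forget_root_steps (subtree_outcome u \<omega>)) \<in> measurable (coord_algebra (subtree_coords u)) BRW"
proof (rule measurable_to_BRW)
  fix w
  show "(\<lambda>\<omega>. fst (forget_root_steps (subtree_outcome u \<omega>)) w)
      \<in> measurable (coord_algebra (subtree_coords u)) (count_space UNIV)"
    by (auto simp: subtree_outcome_def subtree_coords_def intro!: measurable_offspring_coord_algebra)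
next
  fix p :: "nat list \<times> nat list"
  obtain v y where p: "p = (v, y)" by (cases p)
  show "(\<lambda>\<omega>. snd (forget_root_steps (subtree_outcome u \<omega>)) p)
      \<in> measurable (coord_algebra (subtree_coords u)) (count_space UNIV)"
    using measurable_step_coord_algebra[of "(u @ v, y)" "subtree_coords u"]
    by (cases "v = []") (auto simp: forget_root_steps_def subtree_outcome_def subtree_coords_def p)
qed

lemma measurable_subtree_outcome: "subtree_outcome u \<in> measurable BRW BRW"
  and distr_subtree_outcome: "distr BRW BRW (subtree_outcome u) = BRW"
proof -
  let ?f = "\<lambda>N v. N (u @ v)" and ?g = "\<lambda>\<xi> p. \<xi> (u @ fst p, snd p)"
  have f: "?f \<in> measurable Offspring Offspring" "distr Offspring Offspring ?f = Offspring"
    by (simp_all add: measurable_PiM_pmf_reindex distr_PiM_pmf_reindex inj_def)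
  have g: "?g \<in> measurable Steps Steps" "distr Steps Steps ?g = Steps"
    using measurable_PiM_pmf_reindex[of "\<lambda>p. biased_step lam kappa (snd p)" "\<lambda>p. (u @ fst p, snd p)"]
      distr_PiM_pmf_reindex[of "\<lambda>p. (u @ fst p, snd p)" "\<lambda>p. biased_step lam kappa (snd p)"]
    by (auto simp: inj_def prod_eq_iff)
  have eq: "subtree_outcome u = (\<lambda>(N, \<xi>). (?f N, ?g \<xi>))"
    by (auto simp: subtree_outcome_def fun_eq_iff)
  show "subtree_outcome u \<in> measurable BRW BRW"
    unfolding eq BRW_eq using f(1) g(1) by measurable
  interpret Steps: prob_space Steps by (rule prob_space_Steps)
  have "Offspring \<Otimes>\<^sub>M Steps = distr (Offspring \<Otimes>\<^sub>M Steps) (Offspring \<Otimes>\<^sub>M Steps) (\<lambda>(N, \<xi>). (?f N, ?g \<xi>))"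
    using pair_measure_distr[OF f(1) g(1)] by (simp add: f(2) g(2) Steps.sigma_finite_measure_axioms)
  then show "distr BRW BRW (subtree_outcome u) = BRW"
    unfolding eq BRW_eq by simp
qed

lemma prob_vimage_subtree_outcome: "S \<in> events \<Longrightarrow> prob (subtree_outcome u -` S) = prob S"
  using measure_distr[OF measurable_subtree_outcome, of S u] by (simp add: distr_subtree_outcome)

lemma first_return_in_coord_algebra: "first_return K u \<in> sets (coord_algebra (coords_upto (length u)))"
proof -
  have "Measurable.pred BRW (\<lambda>\<omega>. returns_after K \<omega> v)" for v
    unfolding returns_after_def by measurable
  then have "Measurable.pred BRW (\<lambda>\<omega>. returns_after K \<omega> u \<and>
      (\<forall>v. returns_after K \<omega> v \<longrightarrow> (v, u) \<notin> measures [length, to_nat]))"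
    by measurable
  then have "first_return K u \<in> events"
    by (simp add: first_return_def pred_def)
  then show ?thesis
    using vimage_in_coord_algebra[OF measurable_truncate_outcome]
    by (metis vimage_truncate_outcome_first_return)
qed

lemma first_return_in_events: "first_return K u \<in> events"
  using first_return_in_coord_algebra sets_coord_algebra_subset_events by blast

lemma subtree_vimage_in_coord_algebra:
  assumes "S \<in> events" "forget_root_steps -` S = S"
  shows "subtree_outcome u -` S \<in> sets (coord_algebra (subtree_coords u))"
proof -
  have "(\<lambda>\<omega>. forget_root_steps (subtree_outcome u \<omega>)) -` S \<in> sets (coord_algebra (subtree_coords u))"
    by (rule vimage_in_coord_algebra[OF measurable_forget_root_steps_subtree_outcome assms(1)])
  moreover have "(\<lambda>\<omega>. forget_root_steps (subtree_outcome u \<omega>)) -` S = subtree_outcome u -` S"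
    using assms(2) by auto
  ultimately show ?thesis by simp
qed

lemma prob_first_return_Int_subtree:
  assumes B: "B \<in> sets (coord_algebra (coords_upto K))"
    and S: "S \<in> events" "forget_root_steps -` S = S"
  shows "prob (B \<inter> first_return K u \<inter> subtree_outcome u -` S) = prob (B \<inter> first_return K u) * prob S"
proof (cases "K \<le> length u")
  case True
  then have "B \<in> sets (coord_algebra (coords_upto (length u)))"
    using B coord_algebra_mono[OF coords_upto_mono[OF True]] by blast
  then have "B \<inter> first_return K u \<in> sets (coord_algebra (coords_upto (length u)))"
    using first_return_in_coord_algebra by (rule sets.Int)
  then show ?thesis
    using prob_Int_coord_algebra[OF coords_upto_Int_subtree_coords _ subtree_vimage_in_coord_algebra[OF S]]
    by (simp add: prob_vimage_subtree_outcome[OF S(1)])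
next
  case False
  then have "first_return K u = {}" by (auto simp: first_return_def returns_after_def)
  then show ?thesis by simp
qed

lemma prob_first_return_subtree_le:
  assumes B: "B \<in> sets (coord_algebra (coords_upto K))"
    and S: "S \<in> events" "forget_root_steps -` S = S"
  shows "prob (B \<inter> (\<Union>u. first_return K u \<inter> subtree_outcome u -` S)) \<le> prob B * prob S"
proof -
  let ?R = "\<lambda>u. B \<inter> first_return K u" and ?T = "\<lambda>u. subtree_outcome u -` S"
  have B_event: "B \<in> events" using B sets_coord_algebra_subset_events by blast
  have events: "?R u \<in> events" "?T u \<in> events" for u
    using B_event first_return_in_events subtree_vimage_in_coord_algebra[OF S]
      sets_coord_algebra_subset_events by blast+
  have disj: "disjoint_family ?R" "disjoint_family (\<lambda>u. ?R u \<inter> ?T u)"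
    unfolding disjoint_family_on_def using first_return_unique by (blast, blast)
  have "B \<inter> (\<Union>u. first_return K u \<inter> ?T u) = (\<Union>u. ?R u \<inter> ?T u)"
    by blast
  then have "emeasure BRW (B \<inter> (\<Union>u. first_return K u \<inter> ?T u)) = emeasure BRW (\<Union>u. ?R u \<inter> ?T u)"
    by simp
  also have "\<dots> = (\<integral>\<^sup>+u. emeasure BRW (?R u \<inter> ?T u) \<partial>count_space UNIV)"
    using events disj(2) by (intro emeasure_UN_countable) auto
  also have "\<dots> = (\<integral>\<^sup>+u. emeasure BRW (?R u) * ennreal (prob S) \<partial>count_space UNIV)"
    by (intro nn_integral_cong)
      (simp add: emeasure_eq_measure prob_first_return_Int_subtree[OF B S] ennreal_mult)
  also have "\<dots> = (\<integral>\<^sup>+u. emeasure BRW (?R u) \<partial>count_space UNIV) * ennreal (prob S)"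
    by (rule nn_integral_multc) simp
  also have "(\<integral>\<^sup>+u. emeasure BRW (?R u) \<partial>count_space UNIV) = emeasure BRW (\<Union>u. ?R u)"
    using events disj(1) by (intro emeasure_UN_countable[symmetric]) auto
  also have "emeasure BRW (\<Union>u. ?R u) \<le> emeasure BRW B"
    using B_event by (intro emeasure_mono) auto
  finally have "emeasure BRW (B \<inter> (\<Union>u. first_return K u \<inter> ?T u)) \<le> emeasure BRW B * ennreal (prob S)"
    by (simp add: mult_right_mono)
  then show ?thesis
    by (simp add: emeasure_eq_measure flip: ennreal_mult)
qed

lemma prob_Int_compl_speed_event_le:
  assumes offspring: "AE \<omega> in BRW. \<forall>w. 1 \<le> fst \<omega> w"
    and recurrent: "AE \<omega> in BRW. \<forall>n. \<exists>u\<in>gw_tree (fst \<omega>). n \<le> length u \<and> brw_pos (snd \<omega>) [] u = []"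
    and B: "B \<in> sets (coord_algebra (coords_upto K))"
  shows "prob (B \<inter> - speed_event a) \<le> prob B * prob (- speed_event a)"
proof -
  let ?X = "- speed_event a"
  have X_event: "?X \<in> events"
    using sets.compl_sets[OF speed_event_in_events] by (simp add: Compl_eq_Diff_UNIV)
  have B_event: "B \<in> events" using B sets_coord_algebra_subset_events by blast
  have "AE \<omega> in BRW. \<omega> \<in> B \<inter> ?X \<longrightarrow> \<omega> \<in> B \<inter> (\<Union>u. first_return K u \<inter> subtree_outcome u -` ?X)"
    using offspring recurrent
  proof eventually_elim
    case (elim \<omega>)
    show ?case
    proof
      assume \<omega>: "\<omega> \<in> B \<inter> ?X"
      obtain v where "returns_after K \<omega> v"
        using elim(2) by (auto simp: returns_after_def)
      then obtain u where u: "\<omega> \<in> first_return K u" by (rule ex_first_return)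
      then have "u \<in> gw_tree (fst \<omega>)" "brw_pos (snd \<omega>) [] u = []"
        by (simp_all add: first_return_def returns_after_def)
      then have "subtree_outcome u \<omega> \<in> ?X"
        using \<omega> speed_event_of_subtree_at_root elim(1) by blast
      then show "\<omega> \<in> B \<inter> (\<Union>u. first_return K u \<inter> subtree_outcome u -` ?X)"
        using \<omega> u by blast
    qed
  qed
  moreover have "B \<inter> (\<Union>u. first_return K u \<inter> subtree_outcome u -` ?X) \<in> events"
    using B_event first_return_in_events measurable_sets[OF measurable_subtree_outcome X_event]
    by (intro sets.Int sets.countable_UN') auto
  ultimately have "prob (B \<inter> ?X) \<le> prob (B \<inter> (\<Union>u. first_return K u \<inter> subtree_outcome u -` ?X))"
    by (rule finite_measure_mono_AE)
  also have "\<dots> \<le> prob B * prob ?X"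
    using B X_event by (rule prob_first_return_subtree_le) (simp add: vimage_Compl)
  finally show ?thesis .
qed

lemma speed_event_zero_one:
  assumes offspring: "AE \<omega> in BRW. \<forall>w. 1 \<le> fst \<omega> w"
    and recurrent: "AE \<omega> in BRW. \<forall>n. \<exists>u\<in>gw_tree (fst \<omega>). n \<le> length u \<and> brw_pos (snd \<omega>) [] u = []"
  shows "prob (speed_event a) = 0 \<or> prob (speed_event a) = 1"
proof -
  let ?F = "\<lambda>K. coord_algebra (coords_upto K)"
  have "filtration (space BRW) ?F"
    by unfold_locales (simp_all add: coord_algebra_mono coords_upto_mono)
  moreover have "events \<subseteq> sigma_sets (space BRW) (\<Union>K. sets (?F K))"
  proof -
    have "coord i -` A \<in> (\<Union>K. sets (?F K))" for i A
    proof -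
      obtain K where "i \<in> coords_upto K"
        by (cases i) (auto simp: coords_upto_def intro: exI[of _ "Suc (length _)"])
      then show ?thesis by (auto simp: sets_coord_algebra)
    qed
    then have "{coord i -` A | i A. i \<in> UNIV} \<subseteq> (\<Union>K. sets (?F K))" by blast
    then show ?thesis
      unfolding events_eq_coord_algebra sets_coord_algebra space_BRW by (rule sigma_sets_mono')
  qed
  ultimately have "prob (- speed_event a) = 0 \<or> prob (- speed_event a) = 1"
    using sets_coord_algebra_subset_events prob_Int_compl_speed_event_le[OF offspring recurrent]
      sets.compl_sets[OF speed_event_in_events]
    by (intro zero_one_law_filtration) (auto simp: Compl_eq_Diff_UNIV)
  then show ?thesis
    using prob_compl[OF speed_event_in_events] by (auto simp: Compl_eq_Diff_UNIV)
qed

lemma AE_offspring_ge_1: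
  assumes "pmf \<mu> 0 = 0"
  shows "AE \<omega> in BRW. \<forall>w. 1 \<le> fst \<omega> w"
  unfolding AE_all_countable
proof
  fix w
  have "emeasure BRW (coord (Inl w) -` {Inl 0}) = 0"
    using emeasure_coord_cylinder_eq[of "{Inl w}" "\<lambda>_. {Inl 0}"] assms
    by (simp add: emeasure_pmf_single)
  then have "coord (Inl w) -` {Inl 0} \<in> null_sets BRW" by (simp add: null_sets_def coord_vimage_events)
  then show "AE \<omega> in BRW. 1 \<le> fst \<omega> w"
    by (rule AE_I') (auto simp: coord_def)
qed

end

theorem proposition2p6:
  fixes lam :: real and kappa :: "nat list \<Rightarrow> nat" and \<mu> :: "nat pmf" and a :: real
  assumes lam_pos: "lam > 0"
    and kappa_pos: "\<And>x. x \<in> uh_vertices kappa \<Longrightarrow> kappa x \<ge> 1"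
    and mu0: "pmf \<mu> 0 = 0"
    and mu1: "pmf \<mu> 1 < 1"
    and m_fin: "summable (\<lambda>k. real k * pmf \<mu> k)"
    and m_gt1: "(\<Sum>k. real k * pmf \<mu> k) > 1"
    and strongly_recurrent:
      "\<And>x. x \<in> uh_vertices kappa \<Longrightarrow>
         measure (brw_measure lam kappa \<mu>)
           {(N, \<xi>). \<forall>n. \<exists>u \<in> gw_tree N. length u \<ge> n \<and> brw_pos \<xi> x u = x} = 1"
    and a_pos: "a > 0"
  shows "(let E = {(N, \<xi>).
              liminf (\<lambda>n. ereal (Max {real (length (brw_pos \<xi> [] u)) / real n
                                     | u. u \<in> gw_tree N \<and> length u = n})) \<ge> ereal a}
          in E \<in> sets (brw_measure lam kappa \<mu>) \<and>
             measure (brw_measure lam kappa \<mu>) E \<in> {0, 1})"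
proof -
  interpret brw_space lam kappa \<mu> .
  have "{real (length (brw_pos \<xi> [] u)) / real n | u. u \<in> gw_tree N \<and> length u = n}
      = (\<lambda>u. real (length (brw_pos \<xi> [] u)) / real n) ` gw_level N n" for N \<xi> n
    by (auto simp: gw_level_def)
  then have E: "{(N, \<xi>). liminf (\<lambda>n. ereal (Max {real (length (brw_pos \<xi> [] u)) / real n
      | u. u \<in> gw_tree N \<and> length u = n})) \<ge> ereal a} = speed_event a"
    by (auto simp: speed_event_def max_speed_def)
  have "AE \<omega> in BRW. \<omega> \<in> {(N, \<xi>). \<forall>n. \<exists>u \<in> gw_tree N. length u \<ge> n \<and> brw_pos \<xi> [] u = []}"
    using strongly_recurrent[of "[]"] by (intro AE_prob_1) (simp add: uh_vertices_def)
  then have "AE \<omega> in BRW. \<forall>n. \<exists>u\<in>gw_tree (fst \<omega>). n \<le> length u \<and> brw_pos (snd \<omega>) [] u = []"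
    by (rule eventually_mono) auto
  then have "prob (speed_event a) = 0 \<or> prob (speed_event a) = 1"
    by (rule speed_event_zero_one[OF AE_offspring_ge_1[OF mu0]])
  then show ?thesis
    unfolding Let_def E using speed_event_in_events by auto
qed

end
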